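(* Let $K\subseteq\mathbb R^n$ be a convex body and let $u\in S^{n-1}$. Then \[ S_u(K^c)\subseteq \mathrm{conv}_c(S_u(K^c))\subseteq (S_uK)^c. \] In particular $\mathrm{Vol}(K^c)\le \mathrm{Vol}((S_uK)^c)$.
   Context: For $x\in\mathbb R^n$, $B(x,1)$ is the closed Euclidean unit ball centered at $x$. For $A\subseteq\mathbb R^n$, $A^c=\bigcap_{x\in A}B(x,1)$ is its $c$-dual and $\mathrm{conv}_c(A)=A^{cc}$ its $c$-hull. For a compact convex set $K$ and $u\in S^{n-1}$, for each $x$ in the orthogonal projection $P_{u^\perp}(K)$ write $K\cap(x+\mathbb Ru)=[x+a(x)u,x+b(x)u]$; the Steiner symmetral is $S_u(K)=\{x+yu: x\in P_{u^\perp}(K),\ |y|\le |b(x)-a(x)|/2\}$ (and $S_u(\emptyset)=\emptyset$). *)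

theory Defs
  imports "HOL-Analysis.Analysis"
begin

text \<open>c-dual: intersection of closed unit balls centred at points of A
  (the empty intersection is the whole space).\<close>
definition cdual :: "'a::euclidean_space set \<Rightarrow> 'a set" where
  "cdual A = (\<Inter>x\<in>A. cball x 1)"

definition chull :: "'a::euclidean_space set \<Rightarrow> 'a set" where
  "chull A = cdual (cdual A)"

definition proj_perp :: "'a::euclidean_space \<Rightarrow> 'a \<Rightarrow> 'a" where
  "proj_perp u z = z - (z \<bullet> u) *\<^sub>R u"

text \<open>Steiner symmetral in direction u (u a unit vector, K compact convex):
  for x in the projection of K, the chord K \<inter> (x + R u) is
  [x + a(x) u, x + b(x) u] with a(x) = Inf, b(x) = Sup of the parameter set.\<close>
definition steiner :: "'a::euclidean_space \<Rightarrow> 'a set \<Rightarrow> 'a set" where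
  "steiner u K = {x + y *\<^sub>R u | x y. x \<in> proj_perp u ` K \<and>
      \<bar>y\<bar> \<le> \<bar>Sup {t. x + t *\<^sub>R u \<in> K} - Inf {t. x + t *\<^sub>R u \<in> K}\<bar> / 2}"

end

theory Submission
  imports Defs
begin

(* If every point of A is within distance r of every point of B, the same holds for the Steiner
   symmetrals in a direction u.  Take points x + y u and x' + y' u of the symmetrals, and let
   [a, b] and [a', b'] be the parameter ranges of the chords of A over x and of B over x'.  Then
   |y - y'| <= ((b - a) + (b' - a')) / 2, and this average is at most the larger of the "cross"
   differences b' - a and b - a', each of which is the u-component of the difference of a point
   of A over x and a point of B over x'.  For A = K^c and B = K this gives
   S_u(K^c) \<subseteq> (S_u K)^c, and the c-hull inclusion follows because c-duality reverses inclusions.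
   For the volumes, every line parallel to u meets K^c inside its chord, while the centred copy
   of the chord lies in S_u(K^c) \<subseteq> (S_u K)^c; Cavalieri's principle in direction u, obtained
   from Fubini along a coordinate axis after a measure-preserving shear, concludes. *)

abbreviation line_fibre :: "'a::euclidean_space \<Rightarrow> 'a set \<Rightarrow> 'a \<Rightarrow> real set" where
  "line_fibre u A x \<equiv> {t. x + t *\<^sub>R u \<in> A}"

section \<open>Cavalieri's principle along a direction\<close>

lemma emeasure_lborel_Basis_fibres:
  fixes b :: "'a::euclidean_space"
  assumes b: "b \<in> Basis" and A[measurable]: "A \<in> sets borel"
  shows "emeasure lborel A = (\<integral>\<^sup>+x. (\<integral>\<^sup>+y. indicator A ((\<Sum>b'\<in>Basis-{b}. x b' *\<^sub>R b') + y *\<^sub>R b) \<partial>lborel) \<partial>(\<Pi>\<^sub>M b'\<in>Basis-{b}. lborel))"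
proof -
  interpret product_sigma_finite "\<lambda>_. (lborel::real measure)" by standard
  have Basis_eq: "insert b (Basis - {b}) = (Basis::'a set)" using b by auto
  have sum_upd: "(\<Sum>b'\<in>Basis. (x(b:=y)) b' *\<^sub>R b') = (\<Sum>b'\<in>Basis-{b}. x b' *\<^sub>R b') + y *\<^sub>R b" for x y
    using b by (auto simp: sum.remove[of Basis b] add.commute intro!: sum.cong)
  have [measurable]: "(\<lambda>f. \<Sum>b\<in>Basis. f b *\<^sub>R (b::'a)) \<in> borel_measurable (\<Pi>\<^sub>M b\<in>Basis. lborel)"
    by measurable
  have "emeasure lborel A = (\<integral>\<^sup>+f. indicator A (\<Sum>b\<in>Basis. f b *\<^sub>R (b::'a)) \<partial>(\<Pi>\<^sub>M b\<in>Basis. lborel))"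
    by (subst lborel_eq) (simp add: nn_integral_distr flip: nn_integral_indicator)
  also have "\<dots> = (\<integral>\<^sup>+x. (\<integral>\<^sup>+y. indicator A (\<Sum>b'\<in>Basis. (x(b:=y)) b' *\<^sub>R (b'::'a)) \<partial>lborel) \<partial>(\<Pi>\<^sub>M b'\<in>Basis-{b}. lborel))"
    by (subst Basis_eq[symmetric], rule product_nn_integral_insert) (auto simp: Basis_eq)
  finally show ?thesis
    by (simp only: sum_upd)
qed

lemma emeasure_lborel_shear_Basis:
  fixes b :: "'a::euclidean_space"
  assumes b: "b \<in> Basis" and [measurable]: "g \<in> borel_measurable borel"
    and g_invariant: "\<And>w t. g (w + t *\<^sub>R b) = g w" and E[measurable]: "E \<in> sets borel"
  shows "emeasure lborel ((\<lambda>w. w + g w *\<^sub>R b) -` E) = emeasure lborel E"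
proof -
  have shear_E: "(\<lambda>w. w + g w *\<^sub>R b) -` E \<in> sets borel"
    using measurable_sets_borel[of "\<lambda>w. w + g w *\<^sub>R b" borel E] by measurable
  show ?thesis
    unfolding emeasure_lborel_Basis_fibres[OF b shear_E] emeasure_lborel_Basis_fibres[OF b E]
  proof (rule nn_integral_cong)
    fix x :: "'a \<Rightarrow> real"
    define z where "z = (\<Sum>b'\<in>Basis-{b}. x b' *\<^sub>R b')"
    have [measurable]: "(\<lambda>y. indicator E (z + y *\<^sub>R b) :: ennreal) \<in> borel_measurable borel"
      by measurable
    have "(\<integral>\<^sup>+y. indicator E (z + y *\<^sub>R b) \<partial>lborel) = (\<integral>\<^sup>+y. indicator E (z + (g z + y) *\<^sub>R b) \<partial>lborel)"
      using nn_integral_real_affine[of "\<lambda>y. indicator E (z + y *\<^sub>R b)" 1 "g z"] by simp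
    also have "\<dots> = (\<integral>\<^sup>+y. indicator ((\<lambda>w. w + g w *\<^sub>R b) -` E) (z + y *\<^sub>R b) \<partial>lborel)"
      using g_invariant[of z] by (simp add: indicator_def algebra_simps)
    finally show "(\<integral>\<^sup>+y. indicator ((\<lambda>w. w + g w *\<^sub>R b) -` E) ((\<Sum>b'\<in>Basis-{b}. x b' *\<^sub>R b') + y *\<^sub>R b) \<partial>lborel)
        = (\<integral>\<^sup>+y. indicator E ((\<Sum>b'\<in>Basis-{b}. x b' *\<^sub>R b') + y *\<^sub>R b) \<partial>lborel)"
      by (simp add: z_def)
  qed
qed

lemma emeasure_lborel_shear_sum:
  fixes b0 :: "'a::euclidean_space"
  assumes b0: "b0 \<in> Basis" and "finite B" and "B \<subseteq> Basis - {b0}" and "E \<in> sets borel"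
  shows "emeasure lborel ((\<lambda>w. w + (\<Sum>b\<in>B. ((w \<bullet> b0) * a b) *\<^sub>R b)) -` E) = emeasure lborel E"
  using assms(2-)
proof (induction B arbitrary: E rule: finite_induct)
  case empty
  then show ?case by simp
next
  case (insert b B)
  have E[measurable]: "E \<in> sets borel" and b: "b \<in> Basis" "b \<noteq> b0" and B: "B \<subseteq> Basis - {b0}"
    using insert.prems by auto
  define \<sigma> where "\<sigma> = (\<lambda>v::'a. v + ((v \<bullet> b0) * a b) *\<^sub>R b)"
  have [measurable]: "\<sigma> \<in> borel_measurable borel"
    unfolding \<sigma>_def by measurable
  have "\<forall>b'\<in>B. b' \<bullet> b0 = 0"
    using B b0 by (blast intro: inner_not_same_Basis)
  then have "(\<Sum>b'\<in>B. ((w \<bullet> b0) * a b') *\<^sub>R b') \<bullet> b0 = 0" for w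
    by (simp add: inner_sum_left)
  then have "(\<lambda>w. w + (\<Sum>b'\<in>insert b B. ((w \<bullet> b0) * a b') *\<^sub>R b')) -` E
      = (\<lambda>w. w + (\<Sum>b'\<in>B. ((w \<bullet> b0) * a b') *\<^sub>R b')) -` (\<sigma> -` E)"
    using insert.hyps by (auto simp: \<sigma>_def algebra_simps)
  moreover have "emeasure lborel (\<sigma> -` E) = emeasure lborel E"
    unfolding \<sigma>_def using b b0
    by (intro emeasure_lborel_shear_Basis) (auto simp: inner_add_left inner_Basis)
  moreover have "\<sigma> -` E \<in> sets borel"
    using measurable_sets_borel[of \<sigma> borel E] by simp
  ultimately show ?case
    using insert.IH[OF B] by simp
qed

lemma emeasure_lborel_shear:
  fixes b0 :: "'a::euclidean_space"
  assumes b0: "b0 \<in> Basis" and v: "v \<bullet> b0 = 0" and E: "E \<in> sets borel"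
  shows "emeasure lborel ((\<lambda>w. w + (w \<bullet> b0) *\<^sub>R v) -` E) = emeasure lborel E"
proof -
  have "v = (\<Sum>b\<in>Basis. (v \<bullet> b) *\<^sub>R b)"
    by (simp add: euclidean_representation)
  also have "\<dots> = (\<Sum>b\<in>Basis-{b0}. (v \<bullet> b) *\<^sub>R b)"
    using b0 v by (simp add: sum.remove)
  finally have "(w \<bullet> b0) *\<^sub>R v = (\<Sum>b\<in>Basis-{b0}. ((w \<bullet> b0) * (v \<bullet> b)) *\<^sub>R b)" for w
    by (metis (no_types, lifting) scaleR_scaleR scaleR_sum_right sum.cong)
  then show ?thesis
    using emeasure_lborel_shear_sum[OF b0 _ _ E, of "Basis - {b0}" "\<lambda>b. v \<bullet> b"] by simp
qed

lemma emeasure_lborel_line_fibres: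
  fixes u :: "'a::euclidean_space"
  assumes b0: "b0 \<in> Basis" and c: "u \<bullet> b0 \<noteq> 0" and G[measurable]: "G \<in> sets borel"
  shows "emeasure lborel G = (\<integral>\<^sup>+x. ennreal \<bar>u \<bullet> b0\<bar> *
      emeasure lborel (line_fibre u G (\<Sum>b\<in>Basis-{b0}. x b *\<^sub>R b)) \<partial>(\<Pi>\<^sub>M b\<in>Basis-{b0}. lborel))"
proof -
  define c where "c = u \<bullet> b0"
  define \<Psi> where "\<Psi> = (\<lambda>w::'a. w + (w \<bullet> b0) *\<^sub>R ((u - c *\<^sub>R b0) /\<^sub>R c))"
  have \<Psi>_line: "\<Psi> (z + y *\<^sub>R b0) = z + (y / c) *\<^sub>R u" if "z \<bullet> b0 = 0" for z y
    using that b0 c by (simp add: \<Psi>_def c_def algebra_simps divide_inverse)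
  have [measurable]: "\<Psi> \<in> borel_measurable borel"
    unfolding \<Psi>_def by measurable
  have \<Psi>_G: "\<Psi> -` G \<in> sets borel"
    using measurable_sets_borel[of \<Psi> borel G] by simp
  have "((u - c *\<^sub>R b0) /\<^sub>R c) \<bullet> b0 = 0"
    using b0 by (simp add: c_def inner_diff_left)
  then have "emeasure lborel G = emeasure lborel (\<Psi> -` G)"
    unfolding \<Psi>_def by (intro emeasure_lborel_shear[symmetric] b0 G)
  also have "\<dots> = (\<integral>\<^sup>+x. (\<integral>\<^sup>+y. indicator (\<Psi> -` G) ((\<Sum>b\<in>Basis-{b0}. x b *\<^sub>R b) + y *\<^sub>R b0) \<partial>lborel)
      \<partial>(\<Pi>\<^sub>M b\<in>Basis-{b0}. lborel))"
    by (rule emeasure_lborel_Basis_fibres[OF b0 \<Psi>_G])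
  also have "\<dots> = (\<integral>\<^sup>+x. ennreal \<bar>c\<bar> *
      emeasure lborel (line_fibre u G (\<Sum>b\<in>Basis-{b0}. x b *\<^sub>R b)) \<partial>(\<Pi>\<^sub>M b\<in>Basis-{b0}. lborel))"
  proof (rule nn_integral_cong)
    fix x :: "'a \<Rightarrow> real"
    define z where "z = (\<Sum>b\<in>Basis-{b0}. x b *\<^sub>R b)"
    have "z \<bullet> b0 = 0"
      using b0 by (auto simp: z_def inner_sum_left inner_Basis intro!: sum.neutral)
    then have "(\<integral>\<^sup>+y. indicator (\<Psi> -` G) (z + y *\<^sub>R b0) \<partial>lborel)
        = (\<integral>\<^sup>+y. indicator (line_fibre u G z) (y / c) \<partial>lborel)"
      by (simp add: indicator_def \<Psi>_line)
    also have "\<dots> = ennreal \<bar>c\<bar> * (\<integral>\<^sup>+y. indicator (line_fibre u G z) y \<partial>lborel)"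
      using nn_integral_real_affine[of "\<lambda>y. indicator (line_fibre u G z) (y / c)" c 0] c
      by (simp add: c_def)
    finally show "(\<integral>\<^sup>+y. indicator (\<Psi> -` G) (z + y *\<^sub>R b0) \<partial>lborel)
        = ennreal \<bar>c\<bar> * emeasure lborel (line_fibre u G z)"
      by simp
  qed
  finally show ?thesis
    by (simp add: c_def)
qed

lemma emeasure_lborel_mono_line_fibres:
  fixes u :: "'a::euclidean_space"
  assumes "u \<noteq> 0" and "E \<in> sets borel" and "F \<in> sets borel"
    and "\<And>z. emeasure lborel (line_fibre u E z) \<le> emeasure lborel (line_fibre u F z)"
  shows "emeasure lborel E \<le> emeasure lborel F"
proof -
  obtain b0 where b0: "b0 \<in> Basis" and c: "u \<bullet> b0 \<noteq> 0"
    using \<open>u \<noteq> 0\<close> euclidean_all_zero_iff by blast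
  show ?thesis
    unfolding emeasure_lborel_line_fibres[OF b0 c \<open>E \<in> sets borel\<close>]
      emeasure_lborel_line_fibres[OF b0 c \<open>F \<in> sets borel\<close>]
    by (intro nn_integral_mono mult_left_mono assms(4)) simp_all
qed

section \<open>Chords and Steiner symmetrals\<close>

lemma inner_proj_perp:
  assumes "norm u = 1"
  shows "proj_perp u z \<bullet> u = 0"
  using assms by (simp add: proj_perp_def inner_diff_left dot_square_norm)

lemma proj_perp_add_scaleR:
  assumes "norm u = 1" and "x \<bullet> u = 0"
  shows "proj_perp u (x + s *\<^sub>R u) = x"
  using assms by (simp add: proj_perp_def inner_add_left dot_square_norm)

lemma compact_line_fibre:
  fixes u :: "'a::euclidean_space"
  assumes "u \<noteq> 0" and "compact A"
  shows "compact (line_fibre u A x)"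
proof -
  have "closed (line_fibre u A x)"
    using continuous_closed_vimage[OF compact_imp_closed[OF assms(2)], of "\<lambda>t. x + t *\<^sub>R u"]
    by (simp add: vimage_def continuous_intros)
  have "line_fibre u A x \<subseteq> (\<lambda>v. ((v - x) \<bullet> u) / (u \<bullet> u)) ` A"
  proof
    fix t assume "t \<in> line_fibre u A x"
    then show "t \<in> (\<lambda>v. ((v - x) \<bullet> u) / (u \<bullet> u)) ` A"
      using assms(1) by (intro image_eqI[of t _ "x + t *\<^sub>R u"]) auto
  qed
  moreover have "compact ((\<lambda>v. ((v - x) \<bullet> u) / (u \<bullet> u)) ` A)"
    using assms by (intro compact_continuous_image continuous_intros) auto
  ultimately have "bounded (line_fibre u A x)"
    by (metis bounded_subset compact_imp_bounded)
  with \<open>closed (line_fibre u A x)\<close> show ?thesis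
    by (simp add: compact_eq_bounded_closed)
qed

lemma line_fibre_Inf_Sup:
  fixes u :: "'a::euclidean_space"
  assumes "u \<noteq> 0" and "compact A" and "line_fibre u A x \<noteq> {}"
  defines "T \<equiv> line_fibre u A x"
  shows "Inf T \<in> T" and "Sup T \<in> T" and "T \<subseteq> {Inf T..Sup T}"
proof -
  have "compact T"
    unfolding T_def using assms(1,2) by (rule compact_line_fibre)
  then obtain a b where a: "a \<in> T" "\<forall>t\<in>T. a \<le> t" and b: "b \<in> T" "\<forall>t\<in>T. t \<le> b"
    using compact_attains_inf[of T] compact_attains_sup[of T] assms(3) unfolding T_def by blast
  moreover have "Inf T = a" and "Sup T = b"
    using a b by (auto intro: cInf_eq_minimum cSup_eq_maximum)
  ultimately show "Inf T \<in> T" "Sup T \<in> T" "T \<subseteq> {Inf T..Sup T}"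
    by auto
qed

lemma Icc_subset_line_fibre_steiner:
  fixes u :: "'a::euclidean_space"
  assumes "norm u = 1" and "x \<bullet> u = 0" and "x + s *\<^sub>R u \<in> A"
  defines "h \<equiv> (Sup (line_fibre u A x) - Inf (line_fibre u A x)) / 2"
  shows "{-h..h} \<subseteq> line_fibre u (steiner u A) x"
proof
  fix y assume "y \<in> {-h..h}"
  then have "\<bar>y\<bar> \<le> h"
    unfolding atLeastAtMost_iff abs_le_iff by linarith
  also have "\<dots> \<le> \<bar>Sup (line_fibre u A x) - Inf (line_fibre u A x)\<bar> / 2"
    unfolding h_def by (intro divide_right_mono abs_ge_self) simp
  finally have "\<bar>y\<bar> \<le> \<bar>Sup (line_fibre u A x) - Inf (line_fibre u A x)\<bar> / 2" .
  moreover have "x \<in> proj_perp u ` A"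
    using assms(3) proj_perp_add_scaleR[OF assms(1,2), of s] by force
  ultimately show "y \<in> line_fibre u (steiner u A) x"
    unfolding steiner_def by blast
qed

lemma steiner_memE:
  fixes u :: "'a::euclidean_space"
  assumes "p \<in> steiner u A" and u: "norm u = 1" and "compact A"
  obtains x y a b where "p = x + y *\<^sub>R u" and "x \<bullet> u = 0"
    and "x + a *\<^sub>R u \<in> A" and "x + b *\<^sub>R u \<in> A" and "\<bar>y\<bar> \<le> (b - a) / 2"
proof -
  obtain z y where p: "p = proj_perp u z + y *\<^sub>R u" and "z \<in> A"
    and y: "\<bar>y\<bar> \<le> \<bar>Sup (line_fibre u A (proj_perp u z)) - Inf (line_fibre u A (proj_perp u z))\<bar> / 2"
    using assms(1) unfolding steiner_def by auto
  define x where "x = proj_perp u z"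
  have "z \<bullet> u \<in> line_fibre u A x"
    using \<open>z \<in> A\<close> by (simp add: x_def proj_perp_def)
  then have "line_fibre u A x \<noteq> {}"
    by blast
  moreover have "u \<noteq> 0"
    using u by auto
  ultimately have chord: "Inf (line_fibre u A x) \<in> line_fibre u A x" "Sup (line_fibre u A x) \<in> line_fibre u A x"
    "line_fibre u A x \<subseteq> {Inf (line_fibre u A x)..Sup (line_fibre u A x)}"
    using line_fibre_Inf_Sup[OF _ \<open>compact A\<close>] by blast+
  then have "Inf (line_fibre u A x) \<le> Sup (line_fibre u A x)"
    by auto
  show thesis
    by (rule that[of x y "Inf (line_fibre u A x)" "Sup (line_fibre u A x)"])
      (use p y chord \<open>Inf (line_fibre u A x) \<le> Sup (line_fibre u A x)\<close> inner_proj_perp[OF u] in \<open>auto simp: x_def\<close>)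
qed

lemma power2_norm_diff_orthogonal_lines:
  fixes u :: "'a::real_inner"
  assumes "norm u = 1" and "x \<bullet> u = 0" and "x' \<bullet> u = 0"
  shows "(norm ((x + s *\<^sub>R u) - (x' + t *\<^sub>R u)))\<^sup>2 = (norm (x - x'))\<^sup>2 + (s - t)\<^sup>2"
proof -
  have "orthogonal (x - x') ((s - t) *\<^sub>R u)"
    using assms(2,3) by (simp add: orthogonal_def inner_diff_left)
  then have "(norm ((x - x') + (s - t) *\<^sub>R u))\<^sup>2 = (norm (x - x'))\<^sup>2 + (norm ((s - t) *\<^sub>R u))\<^sup>2"
    by (rule norm_add_Pythagorean)
  moreover have "(x + s *\<^sub>R u) - (x' + t *\<^sub>R u) = (x - x') + (s - t) *\<^sub>R u"
    by (simp add: algebra_simps)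
  ultimately show ?thesis
    using assms(1) by (simp only:) simp
qed

lemma abs_diff_le_max_cross:
  fixes y y' a b a' b' :: real
  assumes "\<bar>y\<bar> \<le> (b - a) / 2" and "\<bar>y'\<bar> \<le> (b' - a') / 2"
  shows "\<bar>y - y'\<bar> \<le> max (b' - a) (b - a')"
proof -
  have "\<bar>y - y'\<bar> \<le> ((b' - a) + (b - a')) / 2"
    using add_mono[OF assms] abs_triangle_ineq4[of y y'] by (simp add: field_simps)
  also have "\<dots> \<le> max (b' - a) (b - a')"
    by (simp add: max_def)
  finally show ?thesis .
qed

lemma steiner_dist_le:
  fixes u :: "'a::euclidean_space"
  assumes u: "norm u = 1" and "compact A" and "compact B"
    and AB: "\<And>a b. a \<in> A \<Longrightarrow> b \<in> B \<Longrightarrow> dist a b \<le> r"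
    and "p \<in> steiner u A" and "q \<in> steiner u B"
  shows "dist p q \<le> r"
proof -
  obtain x y a b where p: "p = x + y *\<^sub>R u" and x: "x \<bullet> u = 0"
    and a: "x + a *\<^sub>R u \<in> A" and b: "x + b *\<^sub>R u \<in> A" and y: "\<bar>y\<bar> \<le> (b - a) / 2"
    using steiner_memE[OF \<open>p \<in> steiner u A\<close> u \<open>compact A\<close>] .
  obtain x' y' a' b' where q: "q = x' + y' *\<^sub>R u" and x': "x' \<bullet> u = 0"
    and a': "x' + a' *\<^sub>R u \<in> B" and b': "x' + b' *\<^sub>R u \<in> B" and y': "\<bar>y'\<bar> \<le> (b' - a') / 2"
    using steiner_memE[OF \<open>q \<in> steiner u B\<close> u \<open>compact B\<close>] .
  have "r \<ge> 0"
    using AB[OF a a'] zero_le_dist[of "x + a *\<^sub>R u" "x' + a' *\<^sub>R u"] by linarith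
  have sq_le: "(norm (x - x'))\<^sup>2 + (s - t)\<^sup>2 \<le> r\<^sup>2" if "x + s *\<^sub>R u \<in> A" and "x' + t *\<^sub>R u \<in> B" for s t
  proof -
    have "norm ((x + s *\<^sub>R u) - (x' + t *\<^sub>R u)) \<le> r"
      using AB[OF that] by (simp add: dist_norm)
    then have "(norm ((x + s *\<^sub>R u) - (x' + t *\<^sub>R u)))\<^sup>2 \<le> r\<^sup>2"
      by (simp add: power_mono)
    then show ?thesis
      by (simp add: power2_norm_diff_orthogonal_lines[OF u x x'])
  qed
  have "\<bar>y - y'\<bar> \<le> max (b' - a) (b - a')"
    using y y' by (rule abs_diff_le_max_cross)
  then have "(y - y')\<^sup>2 \<le> (max (b' - a) (b - a'))\<^sup>2"
    using power_mono[OF _ abs_ge_zero, of "y - y'" _ 2] by simp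
  moreover have "(max (b' - a) (b - a'))\<^sup>2 \<le> r\<^sup>2 - (norm (x - x'))\<^sup>2"
    using sq_le[OF a b'] sq_le[OF b a'] by (simp add: max_def power2_commute[of a b'])
  ultimately have "(norm (p - q))\<^sup>2 \<le> r\<^sup>2"
    unfolding p q power2_norm_diff_orthogonal_lines[OF u x x'] by linarith
  then show ?thesis
    unfolding dist_norm using \<open>r \<ge> 0\<close> by (rule power2_le_imp_le)
qed

lemma emeasure_line_fibre_le_steiner:
  fixes u :: "'a::euclidean_space"
  assumes u: "norm u = 1" and "compact L" and LM: "steiner u L \<subseteq> M" and [measurable]: "M \<in> sets borel"
  shows "emeasure lborel (line_fibre u L z) \<le> emeasure lborel (line_fibre u M z)"
proof (cases "line_fibre u L z = {}")
  case True
  then show ?thesis by simp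
next
  case False
  define x c where "x = proj_perp u z" and "c = z \<bullet> u"
  have z: "z = x + c *\<^sub>R u" and x: "x \<bullet> u = 0"
    using inner_proj_perp[OF u] by (simp_all add: x_def c_def proj_perp_def)
  define lo hi where "lo = Inf (line_fibre u L x)" and "hi = Sup (line_fibre u L x)"
  have fibre_z: "t \<in> line_fibre u L z \<longleftrightarrow> c + t \<in> line_fibre u L x" for t
    by (simp add: z algebra_simps)
  then obtain s where s: "x + s *\<^sub>R u \<in> L"
    using False by blast
  then have "line_fibre u L x \<noteq> {}" and "u \<noteq> 0"
    using u by auto
  note chord = line_fibre_Inf_Sup[OF \<open>u \<noteq> 0\<close> \<open>compact L\<close> this(1), folded lo_def hi_def]
  have "lo \<le> hi"
    using chord by auto
  define h where "h = (hi - lo) / 2"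
  have L_chord: "line_fibre u L z \<subseteq> {lo - c..hi - c}"
  proof
    fix t assume "t \<in> line_fibre u L z"
    then have "c + t \<in> {lo..hi}"
      using chord(3) fibre_z by blast
    then show "t \<in> {lo - c..hi - c}"
      by auto
  qed
  have M_chord: "{-h - c..h - c} \<subseteq> line_fibre u M z"
  proof
    fix t assume "t \<in> {-h - c..h - c}"
    then have "c + t \<in> {-h..h}"
      by auto
    then have "x + (c + t) *\<^sub>R u \<in> steiner u L"
      using Icc_subset_line_fibre_steiner[OF u x s, folded lo_def hi_def h_def] by blast
    then show "t \<in> line_fibre u M z"
      using LM by (auto simp: z algebra_simps)
  qed
  have "emeasure lborel (line_fibre u L z) \<le> emeasure lborel {lo - c..hi - c}"
    using L_chord by (rule emeasure_mono) simp
  also have "\<dots> = emeasure lborel {-h - c..h - c}"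
    using \<open>lo \<le> hi\<close> by (simp add: h_def field_simps)
  also have "\<dots> \<le> emeasure lborel (line_fibre u M z)"
    using M_chord by (rule emeasure_mono) measurable
  finally show ?thesis .
qed

lemma measure_le_if_steiner_subset:
  fixes u :: "'a::euclidean_space"
  assumes "norm u = 1" and "compact L" and "compact M" and "steiner u L \<subseteq> M"
  shows "measure lebesgue L \<le> measure lebesgue M"
proof -
  have L[measurable]: "L \<in> sets borel" and M[measurable]: "M \<in> sets borel"
    using assms(2,3) by (simp_all add: borel_compact)
  have "u \<noteq> 0"
    using assms(1) by auto
  then have "emeasure lborel L \<le> emeasure lborel M"
    using L M emeasure_line_fibre_le_steiner[OF assms(1,2,4) M] by (rule emeasure_lborel_mono_line_fibres)
  then have "measure lborel L \<le> measure lborel M"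
    unfolding measure_def by (rule enn2real_mono) (use emeasure_compact_finite[OF assms(3)] in auto)
  then show ?thesis
    by simp
qed

section \<open>c-duality\<close>

lemma subset_cdual_iff: "A \<subseteq> cdual B \<longleftrightarrow> (\<forall>a\<in>A. \<forall>b\<in>B. dist a b \<le> 1)"
  by (auto simp: cdual_def dist_commute)

lemma subset_cdual_commute: "A \<subseteq> cdual B \<longleftrightarrow> B \<subseteq> cdual A"
  unfolding subset_cdual_iff by (metis dist_commute)

lemma cdual_antimono: "A \<subseteq> B \<Longrightarrow> cdual B \<subseteq> cdual A"
  by (auto simp: cdual_def)

lemma subset_chull: "A \<subseteq> chull A"
  unfolding chull_def by (subst subset_cdual_commute) simp

lemma compact_cdual:
  assumes "a \<in> A"
  shows "compact (cdual A)"
proof -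
  have "closed (cdual A)"
    unfolding cdual_def by (intro closed_INT) auto
  moreover have "bounded (cdual A)"
    using assms by (intro bounded_subset[OF bounded_cball, of _ a 1]) (auto simp: cdual_def)
  ultimately show ?thesis
    by (simp add: compact_eq_bounded_closed)
qed

lemma steiner_subset_cdual_steiner:
  fixes u :: "'a::euclidean_space"
  assumes "norm u = 1" and "compact A" and "compact B" and "A \<subseteq> cdual B"
  shows "steiner u A \<subseteq> cdual (steiner u B)"
  using steiner_dist_le[OF assms(1-3), of 1] assms(4) by (simp add: subset_cdual_iff)

theorem theorem2p3:
  fixes K :: "'a::euclidean_space set" and u :: 'a
  assumes "convex K" and "compact K" and "interior K \<noteq> {}"
    and "norm u = 1"
  shows "steiner u (cdual K) \<subseteq> chull (steiner u (cdual K))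
       \<and> chull (steiner u (cdual K)) \<subseteq> cdual (steiner u K)
       \<and> measure lebesgue (cdual K) \<le> measure lebesgue (cdual (steiner u K))"
proof -
  obtain k where "k \<in> K"
    using assms(3) interior_subset by blast
  have "proj_perp u k + 0 *\<^sub>R u \<in> steiner u K"
    unfolding steiner_def using \<open>k \<in> K\<close> by force
  then have compact_cdual_steiner: "compact (cdual (steiner u K))"
    by (rule compact_cdual)
  have "compact (cdual K)"
    using \<open>k \<in> K\<close> by (rule compact_cdual)
  then have symm_subset: "steiner u (cdual K) \<subseteq> cdual (steiner u K)"
    using assms(2,4) by (intro steiner_subset_cdual_steiner) (simp_all add: subset_cdual_commute)
  then have "chull (steiner u (cdual K)) \<subseteq> cdual (steiner u K)"
    unfolding chull_def by (intro cdual_antimono) (simp add: subset_cdual_commute)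
  moreover have "measure lebesgue (cdual K) \<le> measure lebesgue (cdual (steiner u K))"
    using assms(4) \<open>compact (cdual K)\<close> compact_cdual_steiner symm_subset
    by (rule measure_le_if_steiner_subset)
  ultimately show ?thesis
    using subset_chull by blast
qed

end
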